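(* Let $S$ and $T$ be semigroups. If $S\times T$ is finitely right equated, then so are $S$ and $T$.
   Context: For a semigroup $S$ and $a\in S$, $\mathbf{r}_S(a)=\{(s,t)\in S\times S\mid as=at\}$; $S$ is finitely right equated if each $\mathbf{r}_S(a)$ is finitely generated as a right congruence. *)

theory Defs
  imports Main
begin

text \<open>A semigroup is modelled as a (nonempty) type with an associative
binary operation \<open>mult\<close>; its carrier is the whole type.\<close>

definition is_semigroup :: "('a \<Rightarrow> 'a \<Rightarrow> 'a) \<Rightarrow> bool" where
  "is_semigroup mult \<longleftrightarrow> (\<forall>x y z. mult (mult x y) z = mult x (mult y z))"

definition prod_mult :: "('a \<Rightarrow> 'a \<Rightarrow> 'a) \<Rightarrow> ('b \<Rightarrow> 'b \<Rightarrow> 'b)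
    \<Rightarrow> ('a \<times> 'b) \<Rightarrow> ('a \<times> 'b) \<Rightarrow> ('a \<times> 'b)" where
  "prod_mult m1 m2 p q = (m1 (fst p) (fst q), m2 (snd p) (snd q))"

definition right_congruence :: "('a \<Rightarrow> 'a \<Rightarrow> 'a) \<Rightarrow> ('a \<times> 'a) set \<Rightarrow> bool" where
  "right_congruence mult \<rho> \<longleftrightarrow>
     equiv UNIV \<rho> \<and> (\<forall>s t u. (s, t) \<in> \<rho> \<longrightarrow> (mult s u, mult t u) \<in> \<rho>)"

definition right_cong_gen :: "('a \<Rightarrow> 'a \<Rightarrow> 'a) \<Rightarrow> ('a \<times> 'a) set \<Rightarrow> ('a \<times> 'a) set" where
  "right_cong_gen mult X = \<Inter>{\<rho>. right_congruence mult \<rho> \<and> X \<subseteq> \<rho>}"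

definition fg_right_congruence :: "('a \<Rightarrow> 'a \<Rightarrow> 'a) \<Rightarrow> ('a \<times> 'a) set \<Rightarrow> bool" where
  "fg_right_congruence mult \<rho> \<longleftrightarrow> (\<exists>X. finite X \<and> \<rho> = right_cong_gen mult X)"

definition r_ann :: "('a \<Rightarrow> 'a \<Rightarrow> 'a) \<Rightarrow> 'a \<Rightarrow> ('a \<times> 'a) set" where
  "r_ann mult a = {(s, t). mult a s = mult a t}"

definition fin_right_equated :: "('a \<Rightarrow> 'a \<Rightarrow> 'a) \<Rightarrow> bool" where
  "fin_right_equated mult \<longleftrightarrow> (\<forall>a. fg_right_congruence mult (r_ann mult a))"

end

theory Submission
  imports Defs
begin

text \<open>For any \<open>b \<in> T\<close> the first projection maps \<open>r\<^bsub>S\<times>T\<^esub>(a, b)\<close> onto \<open>r\<^sub>S(a)\<close>, since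
\<open>(s, s') \<in> r\<^sub>S(a)\<close> lifts to \<open>((s, b), (s', b))\<close>. Projecting a finite generating set \<open>X\<close> of
\<open>r\<^bsub>S\<times>T\<^esub>(a, b)\<close> yields generators of \<open>r\<^sub>S(a)\<close>: the pullback along the projection of the right
congruence they generate is a right congruence containing \<open>X\<close>, hence all of \<open>r\<^bsub>S\<times>T\<^esub>(a, b)\<close>.
The factor \<open>T\<close> is symmetric.\<close>

lemma right_congruence_iff:
  "right_congruence m \<rho> \<longleftrightarrow>
     (\<forall>x. (x, x) \<in> \<rho>) \<and> (\<forall>x y. (x, y) \<in> \<rho> \<longrightarrow> (y, x) \<in> \<rho>)
     \<and> (\<forall>x y z. (x, y) \<in> \<rho> \<longrightarrow> (y, z) \<in> \<rho> \<longrightarrow> (x, z) \<in> \<rho>)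
     \<and> (\<forall>s t u. (s, t) \<in> \<rho> \<longrightarrow> (m s u, m t u) \<in> \<rho>)"
  unfolding right_congruence_def equiv_def refl_on_def sym_on_def trans_on_def by auto

lemma right_congruence_Inter:
  assumes "\<And>\<rho>. \<rho> \<in> F \<Longrightarrow> right_congruence m \<rho>"
  shows "right_congruence m (\<Inter>F)"
  unfolding right_congruence_iff
proof (intro conjI allI impI InterI)
  fix \<rho> assume "\<rho> \<in> F"
  then have "right_congruence m \<rho>" by (rule assms)
  note \<rho> = this[unfolded right_congruence_iff]
  from \<open>\<rho> \<in> F\<close> have mem: "p \<in> \<rho>" if "p \<in> \<Inter>F" for p
    using that by (rule InterD[rotated])
  show "(x, x) \<in> \<rho>" for x
    using \<rho> by blast
  show "(y, x) \<in> \<rho>" if "(x, y) \<in> \<Inter>F" for x y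
    using \<rho> mem[OF that] by blast
  show "(x, z) \<in> \<rho>" if "(x, y) \<in> \<Inter>F" and "(y, z) \<in> \<Inter>F" for x y z
    using \<rho> mem[OF that(1)] mem[OF that(2)] by blast
  show "(m s u, m t u) \<in> \<rho>" if "(s, t) \<in> \<Inter>F" for s t u
    using \<rho> mem[OF that] by blast
qed

lemma right_congruence_right_cong_gen: "right_congruence m (right_cong_gen m X)"
  unfolding right_cong_gen_def by (rule right_congruence_Inter) simp

lemma right_cong_gen_least:
  "right_congruence m \<rho> \<Longrightarrow> X \<subseteq> \<rho> \<Longrightarrow> right_cong_gen m X \<subseteq> \<rho>"
  unfolding right_cong_gen_def by blast

lemma subset_right_cong_gen: "X \<subseteq> right_cong_gen m X"
  unfolding right_cong_gen_def by blast

lemma right_congruence_inv_image: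
  assumes "right_congruence m \<rho>" and hom: "\<And>p q. h (M p q) = m (h p) (h q)"
  shows "right_congruence M (inv_image \<rho> h)"
  using assms(1) unfolding right_congruence_iff in_inv_image hom by blast

lemma right_congruence_r_ann: "is_semigroup m \<Longrightarrow> right_congruence m (r_ann m a)"
  unfolding right_congruence_iff r_ann_def is_semigroup_def by simp metis

lemma fg_right_congruence_image:
  assumes hom: "\<And>p q. h (M p q) = m (h p) (h q)"
    and \<rho>: "right_congruence m \<rho>"
    and image: "\<rho> = map_prod h h ` \<sigma>"
    and fg: "fg_right_congruence M \<sigma>"
  shows "fg_right_congruence m \<rho>"
proof -
  from fg obtain X where "finite X" and \<sigma>: "\<sigma> = right_cong_gen M X"
    unfolding fg_right_congruence_def by blast
  let ?Y = "map_prod h h ` X"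
  have "map_prod h h ` X \<subseteq> map_prod h h ` \<sigma>"
    unfolding \<sigma> using subset_right_cong_gen by (rule image_mono)
  then have generated_subset: "right_cong_gen m ?Y \<subseteq> \<rho>"
    unfolding image[symmetric] by (rule right_cong_gen_least[OF \<rho>])
  have "right_congruence M (inv_image (right_cong_gen m ?Y) h)"
    by (rule right_congruence_inv_image[where h = h and M = M,
          OF right_congruence_right_cong_gen hom])
  moreover have "X \<subseteq> inv_image (right_cong_gen m ?Y) h"
  proof (rule subrelI)
    fix p q assume "(p, q) \<in> X"
    then have "(h p, h q) \<in> ?Y" by (rule rev_image_eqI) simp
    then show "(p, q) \<in> inv_image (right_cong_gen m ?Y) h"
      unfolding in_inv_image by (rule subsetD[OF subset_right_cong_gen])
  qed
  ultimately have "\<sigma> \<subseteq> inv_image (right_cong_gen m ?Y) h"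
    unfolding \<sigma> by (rule right_cong_gen_least)
  then have "\<rho> \<subseteq> right_cong_gen m ?Y"
    unfolding image by (auto simp: inv_image_def)
  with generated_subset have "\<rho> = right_cong_gen m ?Y"
    by (rule subset_antisym[rotated])
  with \<open>finite X\<close> show ?thesis
    unfolding fg_right_congruence_def by (intro exI[of _ ?Y] conjI finite_imageI)
qed

lemma r_ann_fst_image:
  "r_ann m1 a = map_prod fst fst ` r_ann (prod_mult m1 m2) (a, b)"
proof
  show "r_ann m1 a \<subseteq> map_prod fst fst ` r_ann (prod_mult m1 m2) (a, b)"
  proof
    fix z assume "z \<in> r_ann m1 a"
    then show "z \<in> map_prod fst fst ` r_ann (prod_mult m1 m2) (a, b)"
      by (intro rev_image_eqI[of "((fst z, b), (snd z, b))"])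
        (auto simp: r_ann_def prod_mult_def)
  qed
qed (auto simp: r_ann_def prod_mult_def)

lemma r_ann_snd_image:
  "r_ann m2 b = map_prod snd snd ` r_ann (prod_mult m1 m2) (a, b)"
proof
  show "r_ann m2 b \<subseteq> map_prod snd snd ` r_ann (prod_mult m1 m2) (a, b)"
  proof
    fix z assume "z \<in> r_ann m2 b"
    then show "z \<in> map_prod snd snd ` r_ann (prod_mult m1 m2) (a, b)"
      by (intro rev_image_eqI[of "((a, fst z), (a, snd z))"])
        (auto simp: r_ann_def prod_mult_def)
  qed
qed (auto simp: r_ann_def prod_mult_def)

theorem mainTheorem17:
  fixes m1 :: "'a \<Rightarrow> 'a \<Rightarrow> 'a" and m2 :: "'b \<Rightarrow> 'b \<Rightarrow> 'b"
  assumes "is_semigroup m1" and "is_semigroup m2"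
    and "fin_right_equated (prod_mult m1 m2)"
  shows "fin_right_equated m1 \<and> fin_right_equated m2"
proof -
  have fg: "fg_right_congruence (prod_mult m1 m2) (r_ann (prod_mult m1 m2) p)" for p
    using assms(3) unfolding fin_right_equated_def ..
  have "fg_right_congruence m1 (r_ann m1 a)" for a
    by (rule fg_right_congruence_image[OF _ right_congruence_r_ann[OF assms(1)]
          r_ann_fst_image fg]) (simp add: prod_mult_def)
  moreover have "fg_right_congruence m2 (r_ann m2 b)" for b
    by (rule fg_right_congruence_image[OF _ right_congruence_r_ann[OF assms(2)]
          r_ann_snd_image fg]) (simp add: prod_mult_def)
  ultimately show ?thesis
    unfolding fin_right_equated_def by blast
qed

end
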